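(* Let $\mathsf{T}$ be a rooted plane tree, let $\delta\in\mathsf{Pop}(\mathcal{O}(\mathsf{T}))$, let $v\in\mathsf{T}$, and let $u\in M_\delta(v)$. Then $\delta(u)=\{u\}$. Moreover, if $w$ is a child of $v$ with $w\in\delta(v)$ and $u\in\Delta_{\delta(v)}(w)$, then for every integer $k\geq 1$ such that $w\in\mathsf{Pop}^k(\delta)(v)$, the set $\{u\}$ is a bead of the $w$-section of $\mathsf{Pop}^k(\delta)(v)$ in $\mathsf{Pop}^k(\delta)$.
   Context: A rooted plane tree $\mathsf{T}$ is a finite tree with a distinguished root, regarded as a poset $\leq_\mathsf{T}$ in which $v'\leq_\mathsf{T} v$ iff $v$ lies on the path from $v'$ to the root; children of $v$ are nodes covered by $v$. For a set $S$ of nodes and a node $u$, $\Delta_S(u)=\{x\in S:x\leq_\mathsf{T} u\}$. An ornament is a nonempty set of nodes inducing a connected subgraph; an ornamentation is a map $\delta$ from nodes to ornaments such that the unique maximal element of $\delta(v)$ is $v$ and any two sets $\delta(v),\delta(v')$ are nested or disjoint. $\mathcal{O}(\mathsf{T})$ is the set of ornamentations ordered by pointwise inclusion (a lattice with meet given by pointwise intersection); $\mathsf{Pop}(\delta)=\bigwedge(\{\delta\}\cup\{\delta':\delta'\lessdot\delta\})$ and $\mathsf{Pop}^k$ is its $k$-th iterate. For distinct nodes $u,v$, $v$ wraps $u$ in $\delta$ if $\delta(u)\subseteq\delta(v)$ and there is no node $x$ with $\delta(u)\subsetneq\delta(x)\subsetneq\delta(v)$; the reduction of $\delta(v)$ by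 such $u$ is $\delta(v)\setminus\Delta_{\delta(v)}(u)$; a minimal reduction is a reduction not properly contained in another reduction of $\delta(v)$; $M_\delta(v)$ is the set of nodes $u$ wrapped by $v$ such that the reduction of $\delta(v)$ by $u$ is minimal. For an ornamentation $\sigma$, a node $v$ and a child $v'$ of $v$ with $v'\in\sigma(v)$, the $v'$-section of $\sigma(v)$ is $\Delta_{\sigma(v)}(v')$. An ornament $\sigma(x)$ is a bead of this $v'$-section in $\sigma$ if $x\leq_\mathsf{T} v'$, $x\notin\sigma(v)$, and for every node $y$ on the path from $v'$ to $x$ (endpoints included), either $y\in\sigma(v)$ or $\sigma(y)=\{y\}$. *)

theory Defs
  imports Main
begin

text \<open>A rooted (plane) tree on the finite node set V with root r, given by a parent
  map par (par r = r). The planar order of children plays no role in the notions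
  below, so it is not recorded.\<close>

definition rooted_tree :: "'a set \<Rightarrow> 'a \<Rightarrow> ('a \<Rightarrow> 'a) \<Rightarrow> bool" where
  "rooted_tree V r par \<longleftrightarrow> finite V \<and> r \<in> V \<and> par r = r \<and>
     (\<forall>v\<in>V. par v \<in> V) \<and> (\<forall>v\<in>V. \<exists>n. (par ^^ n) v = r)"

definition tle :: "'a set \<Rightarrow> ('a \<Rightarrow> 'a) \<Rightarrow> 'a \<Rightarrow> 'a \<Rightarrow> bool" where
  "tle V par x y \<longleftrightarrow> x \<in> V \<and> y \<in> V \<and> (\<exists>n. (par ^^ n) x = y)"

definition child :: "'a set \<Rightarrow> 'a \<Rightarrow> ('a \<Rightarrow> 'a) \<Rightarrow> 'a \<Rightarrow> 'a \<Rightarrow> bool" where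
  "child V r par c v \<longleftrightarrow> c \<in> V \<and> v \<in> V \<and> c \<noteq> r \<and> par c = v"

definition Delta :: "'a set \<Rightarrow> ('a \<Rightarrow> 'a) \<Rightarrow> 'a set \<Rightarrow> 'a \<Rightarrow> 'a set" where
  "Delta V par S u = {x \<in> S. tle V par x u}"

definition adj :: "'a set \<Rightarrow> 'a \<Rightarrow> ('a \<Rightarrow> 'a) \<Rightarrow> 'a \<Rightarrow> 'a \<Rightarrow> bool" where
  "adj V r par x y \<longleftrightarrow> child V r par x y \<or> child V r par y x"

definition ornament :: "'a set \<Rightarrow> 'a \<Rightarrow> ('a \<Rightarrow> 'a) \<Rightarrow> 'a set \<Rightarrow> bool" where
  "ornament V r par S \<longleftrightarrow> S \<noteq> {} \<and> S \<subseteq> V \<and>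
     (\<forall>x\<in>S. \<forall>y\<in>S. (\<lambda>a b. a \<in> S \<and> b \<in> S \<and> adj V r par a b)\<^sup>*\<^sup>* x y)"

text \<open>Ornamentations; we fix the value {} outside V so that pointwise inclusion on V
  is the function order.\<close>
definition ornamentation :: "'a set \<Rightarrow> 'a \<Rightarrow> ('a \<Rightarrow> 'a) \<Rightarrow> ('a \<Rightarrow> 'a set) \<Rightarrow> bool" where
  "ornamentation V r par \<delta> \<longleftrightarrow>
     (\<forall>v. v \<notin> V \<longrightarrow> \<delta> v = {}) \<and>
     (\<forall>v\<in>V. ornament V r par (\<delta> v) \<and> v \<in> \<delta> v \<and>
        (\<forall>x\<in>\<delta> v. tle V par x v) \<and> (\<forall>x\<in>\<delta> v. (\<forall>y\<in>\<delta> v. tle V par y x) \<longrightarrow> x = v)) \<and>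
     (\<forall>v\<in>V. \<forall>v'\<in>V. \<delta> v \<subseteq> \<delta> v' \<or> \<delta> v' \<subseteq> \<delta> v \<or> \<delta> v \<inter> \<delta> v' = {})"

definition orn_le :: "'a set \<Rightarrow> ('a \<Rightarrow> 'a set) \<Rightarrow> ('a \<Rightarrow> 'a set) \<Rightarrow> bool" where
  "orn_le V \<delta>' \<delta> \<longleftrightarrow> (\<forall>v\<in>V. \<delta>' v \<subseteq> \<delta> v)"

definition orn_covered :: "'a set \<Rightarrow> 'a \<Rightarrow> ('a \<Rightarrow> 'a) \<Rightarrow> ('a \<Rightarrow> 'a set) \<Rightarrow> ('a \<Rightarrow> 'a set) \<Rightarrow> bool" where
  "orn_covered V r par \<delta>' \<delta> \<longleftrightarrow>
     ornamentation V r par \<delta>' \<and> ornamentation V r par \<delta> \<and>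
     orn_le V \<delta>' \<delta> \<and> \<delta>' \<noteq> \<delta> \<and>
     \<not> (\<exists>\<gamma>. ornamentation V r par \<gamma> \<and> orn_le V \<delta>' \<gamma> \<and> orn_le V \<gamma> \<delta> \<and> \<gamma> \<noteq> \<delta>' \<and> \<gamma> \<noteq> \<delta>)"

text \<open>Pop: meet (pointwise intersection) of \<delta> and its lower covers.\<close>
definition Pop :: "'a set \<Rightarrow> 'a \<Rightarrow> ('a \<Rightarrow> 'a) \<Rightarrow> ('a \<Rightarrow> 'a set) \<Rightarrow> ('a \<Rightarrow> 'a set)" where
  "Pop V r par \<delta> = (\<lambda>v. \<delta> v \<inter> (\<Inter>\<delta>'\<in>{\<delta>'. orn_covered V r par \<delta>' \<delta>}. \<delta>' v))"

definition wraps :: "'a set \<Rightarrow> ('a \<Rightarrow> 'a set) \<Rightarrow> 'a \<Rightarrow> 'a \<Rightarrow> bool" where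
  "wraps V \<delta> v u \<longleftrightarrow> u \<in> V \<and> v \<in> V \<and> u \<noteq> v \<and> \<delta> u \<subseteq> \<delta> v \<and>
     \<not> (\<exists>x\<in>V. \<delta> u \<subset> \<delta> x \<and> \<delta> x \<subset> \<delta> v)"

definition reduction :: "'a set \<Rightarrow> ('a \<Rightarrow> 'a) \<Rightarrow> ('a \<Rightarrow> 'a set) \<Rightarrow> 'a \<Rightarrow> 'a \<Rightarrow> 'a set" where
  "reduction V par \<delta> v u = \<delta> v - Delta V par (\<delta> v) u"

definition Mset :: "'a set \<Rightarrow> ('a \<Rightarrow> 'a) \<Rightarrow> ('a \<Rightarrow> 'a set) \<Rightarrow> 'a \<Rightarrow> 'a set" where
  "Mset V par \<delta> v = {u. wraps V \<delta> v u \<and>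
     \<not> (\<exists>u'. wraps V \<delta> v u' \<and> reduction V par \<delta> v u \<subset> reduction V par \<delta> v u')}"

definition is_bead :: "'a set \<Rightarrow> 'a \<Rightarrow> ('a \<Rightarrow> 'a) \<Rightarrow> ('a \<Rightarrow> 'a set) \<Rightarrow> 'a \<Rightarrow> 'a \<Rightarrow> 'a set \<Rightarrow> bool" where
  "is_bead V r par \<sigma> v v' S \<longleftrightarrow> child V r par v' v \<and> v' \<in> \<sigma> v \<and>
     (\<exists>x\<in>V. S = \<sigma> x \<and> tle V par x v' \<and> x \<notin> \<sigma> v \<and>
        (\<forall>y. tle V par x y \<and> tle V par y v' \<longrightarrow> y \<in> \<sigma> v \<or> \<sigma> y = {y}))"

end

theory Submission
  imports Defs
begin

text \<open>The lower covers of an ornamentation \<delta> are exactly the maps obtained by replacing one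
  ornament \<delta>(v) with its reduction by some u in M_\<delta>(v). Hence Pop removes from \<delta>(v) precisely
  the nodes lying below some u in M_\<delta>(v), and for such u the removed part is all of \<delta>(u).
  If \<delta> = Pop(\<delta>0) and \<delta>(u) were not a singleton, a node of M_\<delta>0(u) would be removed from
  \<delta>0(u) by Pop but kept in \<delta>(v), which is impossible since \<delta>(u) is the part of \<delta>(v) below u;
  so \<delta>(u) = {u}. Applied to the iterates, this shows that every node removed from Pop^k(\<delta>)(v)
  has a singleton ornament, and singletons stay singletons under Pop. Thus each node on the
  path from u to w either stays in Pop^k(\<delta>)(v) or is a singleton, while u itself is already
  removed by the first Pop: this is the bead condition.\<close>

lemma finite_ex_maximal:
  fixes f :: "'a \<Rightarrow> 'b::order"
  assumes "finite A" "a \<in> A"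
  obtains m where "m \<in> A" "f a \<le> f m" "\<And>y. y \<in> A \<Longrightarrow> f m \<le> f y \<Longrightarrow> f y = f m"
proof -
  have "\<exists>M\<in>f ` A. f a \<le> M \<and> (\<forall>b\<in>f ` A. M \<le> b \<longrightarrow> M = b)"
    using assms by (intro finite_has_maximal2) auto
  then show thesis using that by force
qed

lemma finite_ex_minimal:
  fixes f :: "'a \<Rightarrow> 'b::order"
  assumes "finite A" "a \<in> A"
  obtains m where "m \<in> A" "\<And>y. y \<in> A \<Longrightarrow> f y \<le> f m \<Longrightarrow> f y = f m"
proof -
  have "\<exists>M\<in>f ` A. \<forall>b\<in>f ` A. b \<le> M \<longrightarrow> M = b"
    using assms by (intro finite_has_minimal) auto
  then show thesis using that by force
qed

locale tree =
  fixes V :: "'a set" and r :: 'a and par :: "'a \<Rightarrow> 'a"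
  assumes rooted: "rooted_tree V r par"
begin

abbreviation tree_le :: "'a \<Rightarrow> 'a \<Rightarrow> bool" (infix "\<preceq>" 50) where
  "x \<preceq> y \<equiv> tle V par x y"

abbreviation orn :: "('a \<Rightarrow> 'a set) \<Rightarrow> bool" where
  "orn \<delta> \<equiv> ornamentation V r par \<delta>"

abbreviation pop :: "('a \<Rightarrow> 'a set) \<Rightarrow> 'a \<Rightarrow> 'a set" where
  "pop \<equiv> Pop V r par"

abbreviation red :: "('a \<Rightarrow> 'a set) \<Rightarrow> 'a \<Rightarrow> 'a \<Rightarrow> 'a set" where
  "red \<delta> v u \<equiv> reduction V par \<delta> v u"

lemma finite_V: "finite V"
  and par_root: "par r = r"
  and par_in_V: "x \<in> V \<Longrightarrow> par x \<in> V"
  and reaches_root: "x \<in> V \<Longrightarrow> \<exists>n. (par ^^ n) x = r"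
  using rooted unfolding rooted_tree_def by auto

lemma funpow_par_root: "(par ^^ n) r = r"
  by (induction n) (simp_all add: par_root)

lemma par_cycle_imp_root:
  assumes "(par ^^ k) x = x" "0 < k" "x \<in> V"
  shows "x = r"
proof -
  obtain n where n: "(par ^^ n) x = r" using reaches_root assms(3) by blast
  have "((par ^^ k) ^^ n) x = x" by (induction n) (simp_all add: assms(1))
  then have "(par ^^ (k * n)) x = x" by (simp add: funpow_mult)
  moreover have "(par ^^ (k * n)) x = (par ^^ (k * n - n)) ((par ^^ n) x)"
  proof -
    have "k * n = (k * n - n) + n" using assms(2) by (simp add: Suc_leI)
    then show ?thesis by (metis funpow_add o_apply)
  qed
  ultimately show ?thesis using n by (simp add: funpow_par_root)
qed

lemma tle_in_V: "x \<preceq> y \<Longrightarrow> x \<in> V \<and> y \<in> V"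
  unfolding tle_def by auto

lemma tle_refl: "x \<in> V \<Longrightarrow> x \<preceq> x"
  unfolding tle_def by (auto intro: exI[of _ 0])

lemma tle_trans: "x \<preceq> y \<Longrightarrow> y \<preceq> z \<Longrightarrow> x \<preceq> z"
  unfolding tle_def by (metis funpow_add o_apply)

lemma tle_antisym:
  assumes "x \<preceq> y" "y \<preceq> x"
  shows "x = y"
proof -
  obtain n k where n: "(par ^^ n) x = y" and k: "(par ^^ k) y = x" and "x \<in> V"
    using assms unfolding tle_def by auto
  have cycle: "(par ^^ (k + n)) x = x" using n k by (simp add: funpow_add)
  show ?thesis
  proof (cases "k + n = 0")
    case False
    then have "x = r" using par_cycle_imp_root[OF cycle] \<open>x \<in> V\<close> by simp
    then show ?thesis using n funpow_par_root by simp
  qed (use n in simp)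
qed

lemma tle_par: "x \<in> V \<Longrightarrow> x \<preceq> par x"
  unfolding tle_def by (auto simp: par_in_V intro: exI[of _ 1])

lemma par_tle_of_tle:
  assumes "x \<preceq> y" "x \<noteq> y"
  shows "par x \<preceq> y"
proof -
  obtain n where n: "(par ^^ n) x = y" and V: "x \<in> V" "y \<in> V"
    using assms(1) unfolding tle_def by auto
  with assms(2) obtain m where "n = Suc m" by (cases n) auto
  then have "(par ^^ m) (par x) = y" using n by (simp add: funpow_swap1)
  then show ?thesis using V par_in_V unfolding tle_def by auto
qed

lemma tle_linear_above:
  assumes "z \<preceq> x" "z \<preceq> y"
  shows "x \<preceq> y \<or> y \<preceq> x"
proof -
  obtain i j where i: "(par ^^ i) z = x" and j: "(par ^^ j) z = y" and V: "x \<in> V" "y \<in> V"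
    using assms unfolding tle_def by auto
  have "(par ^^ (j - i)) x = y" if "i \<le> j"
    using i j that by (metis funpow_add le_add_diff_inverse2 o_apply)
  moreover have "(par ^^ (i - j)) y = x" if "j \<le> i"
    using i j that by (metis funpow_add le_add_diff_inverse2 o_apply)
  ultimately show ?thesis using V nat_le_linear unfolding tle_def by blast
qed

subsection \<open>Ornaments and ornamentations\<close>

definition rooted_ornament :: "'a \<Rightarrow> 'a set \<Rightarrow> bool" where
  "rooted_ornament v S \<longleftrightarrow> v \<in> S \<and> (\<forall>a\<in>S. a \<preceq> v) \<and> (\<forall>a\<in>S. \<forall>b. a \<preceq> b \<longrightarrow> b \<preceq> v \<longrightarrow> b \<in> S)"

lemma ornament_path_closed:
  assumes S: "ornament V r par S" and "x \<in> S" "a \<in> S" "a \<preceq> b" "b \<preceq> x"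
  shows "b \<in> S"
proof -
  let ?R = "\<lambda>a b. a \<in> S \<and> b \<in> S \<and> adj V r par a b"
  have walk: "?R\<^sup>*\<^sup>* a x" using S \<open>a \<in> S\<close> \<open>x \<in> S\<close> unfolding ornament_def by blast
  \<comment> \<open>If b \<notin> S, the walk from a to x stays strictly below b, which fails at x.\<close>
  have "(z \<preceq> b \<and> z \<noteq> b) \<or> b \<in> S" if "?R\<^sup>*\<^sup>* a z" for z
    using that
  proof (induction rule: rtranclp_induct)
    case base
    then show ?case using \<open>a \<preceq> b\<close> \<open>a \<in> S\<close> by auto
  next
    case (step y z)
    show ?case
    proof (cases "b \<in> S")
      case False
      with step.IH have yb: "y \<preceq> b" "y \<noteq> b" by auto
      from step.hyps(2) have "z \<in> S" and "child V r par y z \<or> child V r par z y"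
        unfolding adj_def by auto
      then show ?thesis
      proof (elim disjE)
        assume "child V r par y z"
        then show ?thesis using par_tle_of_tle[OF yb] \<open>z \<in> S\<close> unfolding child_def by auto
      next
        assume "child V r par z y"
        then have zy: "z \<preceq> y" using tle_par unfolding child_def by blast
        then show ?thesis using yb tle_trans tle_antisym by blast
      qed
    qed simp
  qed
  from this[OF walk] show ?thesis using \<open>b \<preceq> x\<close> tle_antisym by blast
qed

lemma ornament_if_rooted_ornament:
  assumes S: "rooted_ornament x S"
  shows "ornament V r par S"
proof -
  let ?R = "\<lambda>a b. a \<in> S \<and> b \<in> S \<and> adj V r par a b"
  have xS: "x \<in> S" and below: "\<forall>a\<in>S. a \<preceq> x"
    and closed: "\<And>a b. a \<in> S \<Longrightarrow> a \<preceq> b \<Longrightarrow> b \<preceq> x \<Longrightarrow> b \<in> S"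
    using S unfolding rooted_ornament_def by blast+
  have "?R\<^sup>*\<^sup>* a x" if "(par ^^ n) a = x" "a \<in> S" for n a
    using that
  proof (induction n arbitrary: a)
    case (Suc n)
    show ?case
    proof (cases "a = x")
      case False
      have "a \<noteq> r" using Suc.prems False funpow_par_root by metis
      have "a \<preceq> x" using below Suc.prems(2) by blast
      then have "par a \<in> S"
        using closed[OF Suc.prems(2) tle_par par_tle_of_tle] False tle_in_V by blast
      moreover have "(par ^^ n) (par a) = x" using Suc.prems(1) by (simp add: funpow_swap1)
      ultimately have rest: "?R\<^sup>*\<^sup>* (par a) x" using Suc.IH by blast
      have "?R a (par a)"
        using Suc.prems(2) \<open>par a \<in> S\<close> \<open>a \<noteq> r\<close> \<open>a \<preceq> x\<close> tle_in_V par_in_V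
        unfolding adj_def child_def by blast
      from converse_rtranclp_into_rtranclp[of ?R, OF this rest] show ?thesis .
    qed simp
  qed simp
  then have to_top: "?R\<^sup>*\<^sup>* a x" if "a \<in> S" for a
    using that below unfolding tle_def by blast
  have "symp ?R" unfolding symp_def adj_def by auto
  then have "?R\<^sup>*\<^sup>* a b" if "a \<in> S" "b \<in> S" for a b
    using to_top[OF that(1)] to_top[OF that(2)] by (meson rtranclp_trans sympD symp_rtranclp)
  moreover have "S \<subseteq> V" using below tle_in_V by blast
  ultimately show ?thesis unfolding ornament_def using xS by blast
qed

lemma ornament_iff_rooted_ornament:
  assumes "x \<in> S" "\<forall>a\<in>S. a \<preceq> x"
  shows "ornament V r par S \<longleftrightarrow> rooted_ornament x S"
proof
  assume "ornament V r par S"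
  then show "rooted_ornament x S"
    using assms ornament_path_closed[of S x] unfolding rooted_ornament_def by blast
qed (rule ornament_if_rooted_ornament)

lemma ornamentation_iff:
  "orn \<delta> \<longleftrightarrow> (\<forall>v. v \<notin> V \<longrightarrow> \<delta> v = {}) \<and> (\<forall>v\<in>V. rooted_ornament v (\<delta> v)) \<and>
     (\<forall>v\<in>V. \<forall>v'\<in>V. \<delta> v \<subseteq> \<delta> v' \<or> \<delta> v' \<subseteq> \<delta> v \<or> \<delta> v \<inter> \<delta> v' = {})"
proof -
  have "ornament V r par (\<delta> v) \<and> v \<in> \<delta> v \<and> (\<forall>x\<in>\<delta> v. x \<preceq> v) \<and>
      (\<forall>x\<in>\<delta> v. (\<forall>y\<in>\<delta> v. y \<preceq> x) \<longrightarrow> x = v) \<longleftrightarrow> rooted_ornament v (\<delta> v)" for v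
  proof
    assume "rooted_ornament v (\<delta> v)"
    then have "v \<in> \<delta> v" "\<forall>x\<in>\<delta> v. x \<preceq> v" unfolding rooted_ornament_def by auto
    with \<open>rooted_ornament v (\<delta> v)\<close> show "ornament V r par (\<delta> v) \<and> v \<in> \<delta> v \<and>
        (\<forall>x\<in>\<delta> v. x \<preceq> v) \<and> (\<forall>x\<in>\<delta> v. (\<forall>y\<in>\<delta> v. y \<preceq> x) \<longrightarrow> x = v)"
      using ornament_iff_rooted_ornament tle_antisym by metis
  qed (use ornament_iff_rooted_ornament in blast)
  then show ?thesis unfolding ornamentation_def by (simp only:)
qed

lemma orn_outside: "orn \<delta> \<Longrightarrow> v \<notin> V \<Longrightarrow> \<delta> v = {}"
  and orn_rooted: "orn \<delta> \<Longrightarrow> v \<in> V \<Longrightarrow> rooted_ornament v (\<delta> v)"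
  and orn_nested: "orn \<delta> \<Longrightarrow> v \<in> V \<Longrightarrow> v' \<in> V \<Longrightarrow> \<delta> v \<subseteq> \<delta> v' \<or> \<delta> v' \<subseteq> \<delta> v \<or> \<delta> v \<inter> \<delta> v' = {}"
  unfolding ornamentation_iff by blast+

lemma orn_self_mem: "orn \<delta> \<Longrightarrow> v \<in> V \<Longrightarrow> v \<in> \<delta> v"
  using orn_rooted unfolding rooted_ornament_def by blast

lemma orn_tle: "orn \<delta> \<Longrightarrow> x \<in> \<delta> v \<Longrightarrow> x \<preceq> v"
  using orn_rooted orn_outside unfolding rooted_ornament_def by blast

lemma orn_mem_V: "orn \<delta> \<Longrightarrow> x \<in> \<delta> v \<Longrightarrow> x \<in> V \<and> v \<in> V"
  using orn_tle tle_in_V by blast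

lemma orn_path_closed: "orn \<delta> \<Longrightarrow> a \<in> \<delta> v \<Longrightarrow> a \<preceq> b \<Longrightarrow> b \<preceq> v \<Longrightarrow> b \<in> \<delta> v"
  using orn_rooted orn_mem_V unfolding rooted_ornament_def by blast

lemma orn_inj: "orn \<delta> \<Longrightarrow> x \<in> V \<Longrightarrow> y \<in> V \<Longrightarrow> \<delta> x = \<delta> y \<Longrightarrow> x = y"
  using orn_self_mem orn_tle tle_antisym by metis

lemma orn_subset_of_mem:
  assumes \<delta>: "orn \<delta>" and "x \<in> \<delta> y"
  shows "\<delta> x \<subseteq> \<delta> y"
proof -
  have V: "x \<in> V" "y \<in> V" using orn_mem_V[OF \<delta> \<open>x \<in> \<delta> y\<close>] by auto
  have "x \<in> \<delta> x" "y \<in> \<delta> y" using orn_self_mem[OF \<delta>] V by auto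
  consider "\<delta> x \<subseteq> \<delta> y" | "\<delta> y \<subseteq> \<delta> x" | "\<delta> x \<inter> \<delta> y = {}"
    using orn_nested[OF \<delta> V] by blast
  then show ?thesis
  proof cases
    case 2
    then have "x = y" using orn_tle[OF \<delta>] \<open>x \<in> \<delta> y\<close> \<open>y \<in> \<delta> y\<close> tle_antisym by blast
    then show ?thesis by simp
  qed (use \<open>x \<in> \<delta> x\<close> \<open>x \<in> \<delta> y\<close> in auto)
qed

lemma orn_subset_of_common_mem:
  assumes \<delta>: "orn \<delta>" and "z \<in> \<delta> a" "z \<in> \<delta> b" "a \<preceq> b"
  shows "\<delta> a \<subseteq> \<delta> b"
  using orn_subset_of_mem[OF \<delta>] orn_path_closed[OF \<delta> \<open>z \<in> \<delta> b\<close> _ \<open>a \<preceq> b\<close>] orn_tle[OF \<delta>] assms(2)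
  by blast

lemma orn_eqI: "orn \<delta> \<Longrightarrow> orn \<sigma> \<Longrightarrow> (\<And>v. v \<in> V \<Longrightarrow> \<delta> v = \<sigma> v) \<Longrightarrow> \<delta> = \<sigma>"
  using orn_outside by fastforce

lemma orn_INTER:
  assumes "F \<noteq> {}" and F: "\<And>\<sigma>. \<sigma> \<in> F \<Longrightarrow> orn \<sigma>"
  shows "orn (\<lambda>v. \<Inter>\<sigma>\<in>F. \<sigma> v)"
proof -
  let ?I = "\<lambda>v. \<Inter>\<sigma>\<in>F. \<sigma> v"
  obtain \<sigma>0 where "\<sigma>0 \<in> F" using \<open>F \<noteq> {}\<close> by blast
  have I_tle: "a \<preceq> v" if "a \<in> ?I v" for a v
    using orn_tle[OF F[OF \<open>\<sigma>0 \<in> F\<close>]] that \<open>\<sigma>0 \<in> F\<close> by blast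
  have outside: "?I v = {}" if "v \<notin> V" for v
    using I_tle tle_in_V that by blast
  have rooted: "rooted_ornament v (?I v)" if "v \<in> V" for v
    unfolding rooted_ornament_def
  proof (intro conjI ballI allI impI)
    show "v \<in> ?I v" using orn_self_mem[OF F \<open>v \<in> V\<close>] by simp
  next
    fix a b assume "a \<in> ?I v" "a \<preceq> b" "b \<preceq> v"
    show "b \<in> ?I v"
    proof (intro INT_I)
      fix \<sigma> assume "\<sigma> \<in> F"
      then have "a \<in> \<sigma> v" using \<open>a \<in> ?I v\<close> by blast
      then show "b \<in> \<sigma> v"
        using orn_path_closed[OF F[OF \<open>\<sigma> \<in> F\<close>] _ \<open>a \<preceq> b\<close> \<open>b \<preceq> v\<close>] by blast
    qed
  qed (rule I_tle)
  have below: "?I a \<subseteq> ?I b" if "z \<in> ?I a" "z \<in> ?I b" "a \<preceq> b" for a b z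
  proof (intro subsetI INT_I)
    fix x \<sigma> assume "x \<in> ?I a" "\<sigma> \<in> F"
    then show "x \<in> \<sigma> b" using orn_subset_of_common_mem[OF F[OF \<open>\<sigma> \<in> F\<close>]] that by blast
  qed
  have nested: "?I v \<subseteq> ?I v' \<or> ?I v' \<subseteq> ?I v \<or> ?I v \<inter> ?I v' = {}" for v v'
  proof (cases "?I v \<inter> ?I v' = {}")
    case False
    then obtain z where z: "z \<in> ?I v" "z \<in> ?I v'" by blast
    then have "v \<preceq> v' \<or> v' \<preceq> v" using tle_linear_above[OF I_tle I_tle] by blast
    then show ?thesis using below[OF z] below[OF z(2) z(1)] by blast
  qed simp
  show ?thesis unfolding ornamentation_iff by (intro conjI allI impI ballI outside rooted nested)
qed

lemma Pop_subset: "pop \<delta> v \<subseteq> \<delta> v"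
  unfolding Pop_def by blast

lemma orn_Pop:
  assumes "orn \<delta>"
  shows "orn (pop \<delta>)"
proof -
  let ?F = "insert \<delta> {\<sigma>. orn_covered V r par \<sigma> \<delta>}"
  have "pop \<delta> = (\<lambda>v. \<Inter>\<sigma>\<in>?F. \<sigma> v)" unfolding Pop_def by simp
  moreover have "orn \<sigma>" if "\<sigma> \<in> ?F" for \<sigma>
    using that assms unfolding orn_covered_def by blast
  ultimately show ?thesis using orn_INTER[of ?F] by simp
qed

lemma orn_update:
  assumes \<delta>: "orn \<delta>" and "v \<in> V" and S: "rooted_ornament v S"
    and nested: "\<And>y. y \<in> V \<Longrightarrow> y \<noteq> v \<Longrightarrow> \<delta> y \<subseteq> S \<or> S \<subseteq> \<delta> y \<or> S \<inter> \<delta> y = {}"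
  shows "orn (\<delta>(v := S))"
  unfolding ornamentation_iff
proof (intro conjI ballI allI impI)
  fix x
  show "x \<notin> V \<Longrightarrow> (\<delta>(v := S)) x = {}" using orn_outside[OF \<delta>] \<open>v \<in> V\<close> by auto
  show "x \<in> V \<Longrightarrow> rooted_ornament x ((\<delta>(v := S)) x)" using orn_rooted[OF \<delta>] S by auto
next
  fix x y assume "x \<in> V" "y \<in> V"
  then show "(\<delta>(v := S)) x \<subseteq> (\<delta>(v := S)) y \<or> (\<delta>(v := S)) y \<subseteq> (\<delta>(v := S)) x \<or>
      (\<delta>(v := S)) x \<inter> (\<delta>(v := S)) y = {}"
  proof (cases "x = v"; cases "y = v")
    assume "x = v" "y \<noteq> v"
    then show ?thesis using nested[OF \<open>y \<in> V\<close>] by auto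
  next
    assume "x \<noteq> v" "y = v"
    then show ?thesis using nested[OF \<open>x \<in> V\<close>] by auto
  qed (use orn_nested[OF \<delta> \<open>x \<in> V\<close> \<open>y \<in> V\<close>] in auto)
qed

subsection \<open>Reductions and lower covers\<close>

lemma reduction_eq: "red \<delta> v u = {z \<in> \<delta> v. \<not> z \<preceq> u}"
  unfolding reduction_def Delta_def by auto

lemma reduction_subset: "red \<delta> v u \<subseteq> \<delta> v"
  unfolding reduction_def by blast

lemma wraps_mem: "orn \<delta> \<Longrightarrow> wraps V \<delta> v u \<Longrightarrow> u \<in> \<delta> v"
  unfolding wraps_def using orn_self_mem by blast

lemma wrapped_notin_reduction: "wraps V \<delta> v u \<Longrightarrow> u \<notin> red \<delta> v u"
  unfolding wraps_def reduction_eq using tle_refl by blast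

lemma wraps_no_intermediate:
  assumes \<delta>: "orn \<delta>" and w: "wraps V \<delta> v u" and "u \<in> \<delta> x" "x \<in> \<delta> v"
  shows "x = u \<or> x = v"
proof (rule ccontr)
  assume "\<not> (x = u \<or> x = v)"
  moreover have "x \<in> V" "u \<in> V" "v \<in> V" using orn_mem_V[OF \<delta>] assms(3,4) by auto
  ultimately have "\<delta> u \<noteq> \<delta> x" "\<delta> x \<noteq> \<delta> v" using orn_inj[OF \<delta>] by metis+
  moreover have "\<delta> u \<subseteq> \<delta> x" "\<delta> x \<subseteq> \<delta> v" using orn_subset_of_mem[OF \<delta>] assms(3,4) by auto
  ultimately show False using w \<open>x \<in> V\<close> unfolding wraps_def by blast
qed

lemma rooted_ornament_reduction:
  assumes \<delta>: "orn \<delta>" and w: "wraps V \<delta> v u"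
  shows "rooted_ornament v (red \<delta> v u)"
proof -
  have "v \<in> V" "u \<noteq> v" "u \<preceq> v" using w orn_tle[OF \<delta> wraps_mem[OF \<delta> w]] unfolding wraps_def by auto
  then have "v \<in> red \<delta> v u" using orn_self_mem[OF \<delta>] tle_antisym unfolding reduction_eq by blast
  then show ?thesis
    unfolding rooted_ornament_def reduction_eq
    using orn_tle[OF \<delta>] orn_path_closed[OF \<delta>] tle_trans by blast
qed

lemma orn_reduction:
  assumes \<delta>: "orn \<delta>" and w: "wraps V \<delta> v u"
  shows "orn (\<delta>(v := red \<delta> v u))"
proof (rule orn_update[OF \<delta> _ rooted_ornament_reduction[OF \<delta> w]])
  show "v \<in> V" using w unfolding wraps_def by blast
next
  fix y assume "y \<in> V" "y \<noteq> v"
  consider "\<delta> y \<subseteq> \<delta> v" | "\<delta> v \<subseteq> \<delta> y \<or> \<delta> y \<inter> \<delta> v = {}"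
    using orn_nested[OF \<delta> \<open>y \<in> V\<close>] w unfolding wraps_def by blast
  then show "\<delta> y \<subseteq> red \<delta> v u \<or> red \<delta> v u \<subseteq> \<delta> y \<or> red \<delta> v u \<inter> \<delta> y = {}"
  proof cases
    case 1
    show ?thesis
    proof (cases "y \<preceq> u")
      case True
      then have "red \<delta> v u \<inter> \<delta> y = {}"
        unfolding reduction_eq using orn_tle[OF \<delta>] tle_trans by blast
      then show ?thesis by simp
    next
      case False
      have "\<not> z \<preceq> u" if "z \<in> \<delta> y" for z
      proof
        assume "z \<preceq> u"
        then have "u \<preceq> y" using tle_linear_above orn_tle[OF \<delta> that] False by blast
        then have "u \<in> \<delta> y" using orn_path_closed[OF \<delta> that \<open>z \<preceq> u\<close>] by blast
        moreover have "y \<in> \<delta> v" using 1 orn_self_mem[OF \<delta> \<open>y \<in> V\<close>] by blast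
        ultimately show False
          using wraps_no_intermediate[OF \<delta> w] \<open>y \<noteq> v\<close> False tle_refl[OF \<open>y \<in> V\<close>] by blast
      qed
      then have "\<delta> y \<subseteq> red \<delta> v u" unfolding reduction_eq using 1 by blast
      then show ?thesis by simp
    qed
  next
    case 2
    then show ?thesis using reduction_subset[of \<delta> v u] by blast
  qed
qed

lemma subset_reductionI:
  assumes \<gamma>: "orn \<gamma>" and "\<gamma> v \<subseteq> \<delta> v" "u \<notin> \<gamma> v" "u \<preceq> v"
  shows "\<gamma> v \<subseteq> red \<delta> v u"
  unfolding reduction_eq using orn_path_closed[OF \<gamma> _ _ \<open>u \<preceq> v\<close>] assms(2,3) by blast

lemma ex_wraps_reduction_supset:
  assumes \<delta>: "orn \<delta>" and \<gamma>: "orn \<gamma>" and "v \<in> V" and "\<gamma> v \<subset> \<delta> v"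
    and same: "\<And>y. y \<in> V \<Longrightarrow> y \<noteq> v \<Longrightarrow> \<gamma> y = \<delta> y"
  obtains u where "wraps V \<delta> v u" "\<gamma> v \<subseteq> red \<delta> v u"
proof -
  let ?D = "\<delta> v - \<gamma> v"
  obtain a where "a \<in> ?D" using \<open>\<gamma> v \<subset> \<delta> v\<close> by blast
  have "?D \<subseteq> V" using orn_mem_V[OF \<delta>] by blast
  then have "finite ?D" using finite_V by (rule finite_subset)
  then obtain u where "u \<in> ?D" "\<delta> a \<subseteq> \<delta> u"
    and maximal: "\<And>y. y \<in> ?D \<Longrightarrow> \<delta> u \<subseteq> \<delta> y \<Longrightarrow> \<delta> y = \<delta> u"
    using finite_ex_maximal[where f = \<delta>] \<open>a \<in> ?D\<close> by blast
  have "u \<in> V" "u \<noteq> v" using orn_mem_V[OF \<delta>] orn_self_mem[OF \<gamma> \<open>v \<in> V\<close>] \<open>u \<in> ?D\<close> by auto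
  have "wraps V \<delta> v u"
    unfolding wraps_def
  proof (intro conjI notI)
    show "\<delta> u \<subseteq> \<delta> v" using orn_subset_of_mem[OF \<delta>] \<open>u \<in> ?D\<close> by blast
    assume "\<exists>x\<in>V. \<delta> u \<subset> \<delta> x \<and> \<delta> x \<subset> \<delta> v"
    then obtain x where "x \<in> V" "\<delta> u \<subset> \<delta> x" "\<delta> x \<subset> \<delta> v" by blast
    then have "x \<in> \<delta> v" "x \<noteq> v" using orn_self_mem[OF \<delta>] by auto
    show False
    proof (cases "x \<in> \<gamma> v")
      case True
      have "u \<in> \<gamma> x" using same[OF \<open>x \<in> V\<close> \<open>x \<noteq> v\<close>] orn_self_mem[OF \<delta> \<open>u \<in> V\<close>] \<open>\<delta> u \<subset> \<delta> x\<close>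
        by blast
      then show False using orn_subset_of_mem[OF \<gamma> True] \<open>u \<in> ?D\<close> by blast
    next
      case False
      then show False using maximal[of x] \<open>x \<in> \<delta> v\<close> \<open>\<delta> u \<subset> \<delta> x\<close> by blast
    qed
  qed (use \<open>u \<in> V\<close> \<open>v \<in> V\<close> \<open>u \<noteq> v\<close> in auto)
  moreover have "\<gamma> v \<subseteq> red \<delta> v u"
    using subset_reductionI[OF \<gamma>] orn_tle[OF \<delta>] \<open>u \<in> ?D\<close> \<open>\<gamma> v \<subset> \<delta> v\<close> by blast
  ultimately show thesis using that by blast
qed

lemma orn_le_update: "S \<subseteq> \<delta> v \<Longrightarrow> orn_le V (\<delta>(v := S)) \<delta>"
  unfolding orn_le_def by simp

lemma orn_covered_reduction:
  assumes \<delta>: "orn \<delta>" and u: "u \<in> Mset V par \<delta> v"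
  shows "orn_covered V r par (\<delta>(v := red \<delta> v u)) \<delta>"
proof -
  let ?\<epsilon> = "\<delta>(v := red \<delta> v u)"
  have w: "wraps V \<delta> v u" and minimal: "\<And>u'. wraps V \<delta> v u' \<Longrightarrow> \<not> red \<delta> v u \<subset> red \<delta> v u'"
    using u unfolding Mset_def by blast+
  have "v \<in> V" using w unfolding wraps_def by blast
  have "?\<epsilon> \<noteq> \<delta>"
    using wrapped_notin_reduction[OF w] wraps_mem[OF \<delta> w] by (metis fun_upd_same)
  moreover have "\<gamma> = ?\<epsilon> \<or> \<gamma> = \<delta>" if \<gamma>: "orn \<gamma>" "orn_le V ?\<epsilon> \<gamma>" "orn_le V \<gamma> \<delta>" for \<gamma>
  proof -
    have same: "\<gamma> y = \<delta> y" if "y \<in> V" "y \<noteq> v" for y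
      using \<gamma>(2,3) that unfolding orn_le_def by fastforce
    have between: "red \<delta> v u \<subseteq> \<gamma> v" "\<gamma> v \<subseteq> \<delta> v"
      using \<gamma>(2,3) \<open>v \<in> V\<close> unfolding orn_le_def by force+
    show ?thesis
    proof (cases "\<gamma> v = \<delta> v")
      case True
      then show ?thesis using orn_eqI[OF \<gamma>(1) \<delta>] same by metis
    next
      case False
      then obtain u' where "wraps V \<delta> v u'" "\<gamma> v \<subseteq> red \<delta> v u'"
        using ex_wraps_reduction_supset[OF \<delta> \<gamma>(1) \<open>v \<in> V\<close> _ same] between by (metis psubsetI)
      then have "\<gamma> v = red \<delta> v u" using minimal between by blast
      then show ?thesis using orn_eqI[OF \<gamma>(1) orn_reduction[OF \<delta> w]] same by simp
    qed
  qed
  ultimately show ?thesis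
    unfolding orn_covered_def
    using orn_reduction[OF \<delta> w] \<delta> orn_le_update[of "red \<delta> v u" \<delta> v, OF reduction_subset]
    by blast
qed

lemma orn_covered_differs_at_one_node:
  assumes "orn_covered V r par \<sigma> \<delta>"
  obtains v where "v \<in> V" "\<sigma> v \<subset> \<delta> v" "\<And>y. y \<in> V \<Longrightarrow> y \<noteq> v \<Longrightarrow> \<sigma> y = \<delta> y"
proof -
  have \<sigma>: "orn \<sigma>" and \<delta>: "orn \<delta>" and le: "orn_le V \<sigma> \<delta>" and "\<sigma> \<noteq> \<delta>"
    and no_between: "\<And>\<gamma>. orn \<gamma> \<Longrightarrow> orn_le V \<sigma> \<gamma> \<Longrightarrow> orn_le V \<gamma> \<delta> \<Longrightarrow> \<gamma> = \<sigma> \<or> \<gamma> = \<delta>"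
    using assms unfolding orn_covered_def by blast+
  let ?C = "{y \<in> V. \<sigma> y \<noteq> \<delta> y}"
  obtain a where "a \<in> ?C" using orn_eqI[OF \<sigma> \<delta>] \<open>\<sigma> \<noteq> \<delta>\<close> by blast
  \<comment> \<open>For v with \<delta> v minimal, \<delta>(v := \<sigma> v) is an ornamentation between \<sigma> and \<delta>.\<close>
  moreover have "finite ?C" using finite_V by simp
  ultimately obtain v where "v \<in> ?C" and minimal: "\<And>y. y \<in> ?C \<Longrightarrow> \<delta> y \<subseteq> \<delta> v \<Longrightarrow> \<delta> y = \<delta> v"
    using finite_ex_minimal[where f = \<delta>] by blast
  have "v \<in> V" "\<sigma> v \<subset> \<delta> v" using \<open>v \<in> ?C\<close> le unfolding orn_le_def by auto
  let ?\<gamma> = "\<delta>(v := \<sigma> v)"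
  have "orn ?\<gamma>"
  proof (rule orn_update[OF \<delta> \<open>v \<in> V\<close> orn_rooted[OF \<sigma> \<open>v \<in> V\<close>]])
    fix y assume "y \<in> V" "y \<noteq> v"
    consider "\<delta> y \<subseteq> \<delta> v" | "\<delta> v \<subseteq> \<delta> y \<or> \<delta> y \<inter> \<delta> v = {}"
      using orn_nested[OF \<delta> \<open>y \<in> V\<close> \<open>v \<in> V\<close>] by blast
    then show "\<delta> y \<subseteq> \<sigma> v \<or> \<sigma> v \<subseteq> \<delta> y \<or> \<sigma> v \<inter> \<delta> y = {}"
    proof cases
      case 1
      then have "\<sigma> y = \<delta> y"
        using minimal[of y] orn_inj[OF \<delta> \<open>y \<in> V\<close> \<open>v \<in> V\<close>] \<open>y \<in> V\<close> \<open>y \<noteq> v\<close> by auto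
      then show ?thesis using orn_nested[OF \<sigma> \<open>y \<in> V\<close> \<open>v \<in> V\<close>] by auto
    next
      case 2
      then show ?thesis using \<open>\<sigma> v \<subset> \<delta> v\<close> by blast
    qed
  qed
  moreover have "orn_le V \<sigma> ?\<gamma>" "orn_le V ?\<gamma> \<delta>" using le unfolding orn_le_def by auto
  moreover have "?\<gamma> \<noteq> \<delta>" using \<open>\<sigma> v \<subset> \<delta> v\<close> by (metis fun_upd_same less_irrefl)
  ultimately have "?\<gamma> = \<sigma>" using no_between by blast
  then show thesis using that \<open>v \<in> V\<close> \<open>\<sigma> v \<subset> \<delta> v\<close> by (metis fun_upd_other)
qed

lemma orn_covered_imp_reduction:
  assumes cov: "orn_covered V r par \<sigma> \<delta>"
  obtains v u where "u \<in> Mset V par \<delta> v" "\<sigma> = \<delta>(v := red \<delta> v u)"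
proof -
  have \<sigma>: "orn \<sigma>" and \<delta>: "orn \<delta>"
    and no_between: "\<And>\<gamma>. orn \<gamma> \<Longrightarrow> orn_le V \<sigma> \<gamma> \<Longrightarrow> orn_le V \<gamma> \<delta> \<Longrightarrow> \<gamma> = \<sigma> \<or> \<gamma> = \<delta>"
    using cov unfolding orn_covered_def by blast+
  obtain v where "v \<in> V" "\<sigma> v \<subset> \<delta> v" and same: "\<And>y. y \<in> V \<Longrightarrow> y \<noteq> v \<Longrightarrow> \<sigma> y = \<delta> y"
    using orn_covered_differs_at_one_node[OF cov] by blast
  have reduction_is_\<sigma>: "\<delta>(v := red \<delta> v u) = \<sigma>" if "wraps V \<delta> v u" "\<sigma> v \<subseteq> red \<delta> v u" for u
  proof -
    have "\<delta>(v := red \<delta> v u) \<noteq> \<delta>"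
      using wrapped_notin_reduction[OF that(1)] wraps_mem[OF \<delta> that(1)] by (metis fun_upd_same)
    moreover have "orn_le V \<sigma> (\<delta>(v := red \<delta> v u))" using that(2) same unfolding orn_le_def by simp
    ultimately show ?thesis
      using no_between orn_reduction[OF \<delta> that(1)] orn_le_update[of "red \<delta> v u" \<delta> v, OF reduction_subset]
      by blast
  qed
  obtain u where u: "wraps V \<delta> v u" "\<sigma> v \<subseteq> red \<delta> v u"
    using ex_wraps_reduction_supset[OF \<delta> \<sigma> \<open>v \<in> V\<close> \<open>\<sigma> v \<subset> \<delta> v\<close> same] by blast
  have "u \<in> Mset V par \<delta> v"
    unfolding Mset_def
  proof (intro CollectI conjI notI u(1))
    assume "\<exists>u'. wraps V \<delta> v u' \<and> red \<delta> v u \<subset> red \<delta> v u'"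
    then obtain u' where "wraps V \<delta> v u'" "red \<delta> v u \<subset> red \<delta> v u'" by blast
    then have "\<delta>(v := red \<delta> v u') = \<delta>(v := red \<delta> v u)" using reduction_is_\<sigma> u by auto
    then show False using \<open>red \<delta> v u \<subset> red \<delta> v u'\<close> by (metis fun_upd_same less_irrefl)
  qed
  then show thesis using that reduction_is_\<sigma>[OF u] by metis
qed

lemma Pop_eq:
  assumes \<delta>: "orn \<delta>"
  shows "pop \<delta> v = \<delta> v - (\<Union>u\<in>Mset V par \<delta> v. Delta V par (\<delta> v) u)"
proof
  show "pop \<delta> v \<subseteq> \<delta> v - (\<Union>u\<in>Mset V par \<delta> v. Delta V par (\<delta> v) u)"
  proof
    fix z assume z: "z \<in> pop \<delta> v"
    have "z \<in> red \<delta> v u" if "u \<in> Mset V par \<delta> v" for u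
      using z orn_covered_reduction[OF \<delta> that] unfolding Pop_def by force
    then show "z \<in> \<delta> v - (\<Union>u\<in>Mset V par \<delta> v. Delta V par (\<delta> v) u)"
      using z Pop_subset unfolding reduction_def by blast
  qed
  show "\<delta> v - (\<Union>u\<in>Mset V par \<delta> v. Delta V par (\<delta> v) u) \<subseteq> pop \<delta> v"
  proof
    fix z assume z: "z \<in> \<delta> v - (\<Union>u\<in>Mset V par \<delta> v. Delta V par (\<delta> v) u)"
    have "z \<in> \<sigma> v" if cov: "orn_covered V r par \<sigma> \<delta>" for \<sigma>
    proof -
      obtain x u where "u \<in> Mset V par \<delta> x" "\<sigma> = \<delta>(x := red \<delta> x u)"
        using orn_covered_imp_reduction[OF cov] .
      then show ?thesis using z unfolding reduction_def by (cases "x = v") auto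
    qed
    then show "z \<in> pop \<delta> v" using z unfolding Pop_def by blast
  qed
qed

lemma Mset_notin_Pop:
  assumes \<delta>: "orn \<delta>" and u: "u \<in> Mset V par \<delta> v"
  shows "u \<notin> pop \<delta> v"
proof -
  have "wraps V \<delta> v u" using u unfolding Mset_def by blast
  then have "u \<in> Delta V par (\<delta> v) u"
    using wraps_mem[OF \<delta>] tle_refl unfolding wraps_def Delta_def by blast
  then show ?thesis using Pop_eq[OF \<delta>, of v] u by blast
qed

subsection \<open>Pop of a Pop\<close>

lemma ex_wraps_above:
  assumes \<delta>: "orn \<delta>" and "z \<in> \<delta> v" "z \<noteq> v"
  obtains x where "wraps V \<delta> v x" "z \<in> \<delta> x"
proof -
  have "z \<in> V" "v \<in> V" using orn_mem_V[OF \<delta> \<open>z \<in> \<delta> v\<close>] by auto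
  let ?A = "{y \<in> V. z \<in> \<delta> y \<and> \<delta> y \<subset> \<delta> v}"
  have "\<delta> z \<subset> \<delta> v"
    using orn_subset_of_mem[OF \<delta> \<open>z \<in> \<delta> v\<close>] orn_inj[OF \<delta> \<open>z \<in> V\<close> \<open>v \<in> V\<close>] \<open>z \<noteq> v\<close> by blast
  then have "z \<in> ?A" using orn_self_mem[OF \<delta> \<open>z \<in> V\<close>] \<open>z \<in> V\<close> by blast
  moreover have "finite ?A" using finite_V by simp
  ultimately obtain x where "x \<in> ?A" "\<delta> z \<subseteq> \<delta> x"
    and maximal: "\<And>y. y \<in> ?A \<Longrightarrow> \<delta> x \<subseteq> \<delta> y \<Longrightarrow> \<delta> y = \<delta> x"
    using finite_ex_maximal[where f = \<delta>] by blast
  then have x: "x \<in> V" "z \<in> \<delta> x" "\<delta> x \<subset> \<delta> v" by auto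
  have "wraps V \<delta> v x"
    unfolding wraps_def
  proof (intro conjI notI)
    show "x \<in> V" "v \<in> V" "\<delta> x \<subseteq> \<delta> v" using x \<open>v \<in> V\<close> by auto
    show "x = v \<Longrightarrow> False" using x(3) by blast
  next
    assume "\<exists>y\<in>V. \<delta> x \<subset> \<delta> y \<and> \<delta> y \<subset> \<delta> v"
    then obtain y where "y \<in> V" "\<delta> x \<subset> \<delta> y" "\<delta> y \<subset> \<delta> v" by blast
    then show False using maximal[of y] x by blast
  qed
  then show thesis using that x(2) by blast
qed

lemma Mset_nonempty:
  assumes \<delta>: "orn \<delta>" and "v \<in> V" "\<delta> v \<noteq> {v}"
  shows "Mset V par \<delta> v \<noteq> {}"
proof -
  obtain z where "z \<in> \<delta> v" "z \<noteq> v" using orn_self_mem[OF \<delta> \<open>v \<in> V\<close>] \<open>\<delta> v \<noteq> {v}\<close> by blast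
  then obtain x where "wraps V \<delta> v x" using ex_wraps_above[OF \<delta>] by blast
  have "{u. wraps V \<delta> v u} \<subseteq> V" unfolding wraps_def by blast
  then have "finite {u. wraps V \<delta> v u}" using finite_V by (rule finite_subset)
  then obtain u where "u \<in> {u. wraps V \<delta> v u}" "red \<delta> v x \<subseteq> red \<delta> v u"
    and "\<And>u'. u' \<in> {u. wraps V \<delta> v u} \<Longrightarrow> red \<delta> v u \<subseteq> red \<delta> v u' \<Longrightarrow> red \<delta> v u' = red \<delta> v u"
    using finite_ex_maximal[where f = "red \<delta> v"] \<open>wraps V \<delta> v x\<close> by blast
  then have "u \<in> Mset V par \<delta> v" unfolding Mset_def by blast
  then show ?thesis by blast
qed

lemma Delta_Mset_eq:
  assumes \<delta>: "orn \<delta>" and u: "u \<in> Mset V par \<delta> v"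
  shows "Delta V par (\<delta> v) u = \<delta> u"
proof
  have w: "wraps V \<delta> v u" and minimal: "\<And>u'. wraps V \<delta> v u' \<Longrightarrow> \<not> red \<delta> v u \<subset> red \<delta> v u'"
    using u unfolding Mset_def by blast+
  have "u \<noteq> v" "u \<in> V" "\<delta> u \<subseteq> \<delta> v" using w unfolding wraps_def by auto
  then show "\<delta> u \<subseteq> Delta V par (\<delta> v) u" unfolding Delta_def using orn_tle[OF \<delta>] by blast
  show "Delta V par (\<delta> v) u \<subseteq> \<delta> u"
  proof
    fix z assume "z \<in> Delta V par (\<delta> v) u"
    then have "z \<in> \<delta> v" "z \<preceq> u" unfolding Delta_def by auto
    show "z \<in> \<delta> u"
    proof (rule ccontr)
      assume "z \<notin> \<delta> u"
      have "z \<noteq> v"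
        using \<open>z \<preceq> u\<close> orn_tle[OF \<delta> wraps_mem[OF \<delta> w]] tle_antisym \<open>u \<noteq> v\<close> by blast
      then obtain x where wx: "wraps V \<delta> v x" and "z \<in> \<delta> x"
        using ex_wraps_above[OF \<delta> \<open>z \<in> \<delta> v\<close>] by blast
      then have "x \<noteq> u" "x \<noteq> v" using \<open>z \<notin> \<delta> u\<close> unfolding wraps_def by auto
      consider "u \<preceq> x" | "x \<preceq> u" using tle_linear_above[OF \<open>z \<preceq> u\<close>] orn_tle[OF \<delta> \<open>z \<in> \<delta> x\<close>] by blast
      then show False
      proof cases
        case 1
        then have "u \<in> \<delta> x" using orn_path_closed[OF \<delta> \<open>z \<in> \<delta> x\<close> \<open>z \<preceq> u\<close>] by blast
        then show False
          using wraps_no_intermediate[OF \<delta> w _ wraps_mem[OF \<delta> wx]] \<open>x \<noteq> u\<close> \<open>x \<noteq> v\<close> by blast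
      next
        case 2
        have "red \<delta> v u \<subseteq> red \<delta> v x" unfolding reduction_eq using 2 tle_trans by blast
        moreover have "u \<in> red \<delta> v x"
          unfolding reduction_eq using wraps_mem[OF \<delta> w] 2 \<open>x \<noteq> u\<close> tle_antisym by blast
        ultimately show False using minimal[OF wx] wrapped_notin_reduction[OF w] by blast
      qed
    qed
  qed
qed

lemma Mset_Pop_singleton:
  assumes \<delta>: "orn \<delta>" and u: "u \<in> Mset V par (pop \<delta>) v"
  shows "pop \<delta> u = {u}"
proof (rule ccontr)
  assume "pop \<delta> u \<noteq> {u}"
  have \<sigma>: "orn (pop \<delta>)" using orn_Pop[OF \<delta>] .
  have w: "wraps V (pop \<delta>) v u" using u unfolding Mset_def by blast
  then have "u \<in> V" "u \<noteq> v" and "u \<in> pop \<delta> v" using wraps_mem[OF \<sigma>] unfolding wraps_def by auto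
  then have "\<delta> u \<noteq> {u}" using \<open>pop \<delta> u \<noteq> {u}\<close> orn_self_mem[OF \<sigma>] Pop_subset[of \<delta> u] by blast
  then obtain m where m: "m \<in> Mset V par \<delta> u" using Mset_nonempty[OF \<delta> \<open>u \<in> V\<close>] by blast
  have wm: "wraps V \<delta> u m" using m unfolding Mset_def by blast
  have "m \<in> \<delta> u" "m \<preceq> u" using wraps_mem[OF \<delta> wm] orn_tle[OF \<delta>] by auto
  have "m \<notin> pop \<delta> u" using Mset_notin_Pop[OF \<delta> m] .
  have "\<delta> u \<subseteq> \<delta> v" using orn_subset_of_mem[OF \<delta>] \<open>u \<in> pop \<delta> v\<close> Pop_subset by blast
  have "\<not> m \<preceq> m'" if m': "m' \<in> Mset V par \<delta> v" for m'
  proof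
    assume "m \<preceq> m'"
    have w': "wraps V \<delta> v m'" using m' unfolding Mset_def by blast
    have "\<not> u \<preceq> m'"
      using Pop_eq[OF \<delta>, of v] \<open>u \<in> pop \<delta> v\<close> m' unfolding Delta_def by blast
    then have "m' \<preceq> u" using tle_linear_above[OF \<open>m \<preceq> m'\<close> \<open>m \<preceq> u\<close>] by blast
    then have "m' \<in> \<delta> u" using orn_path_closed[OF \<delta> \<open>m \<in> \<delta> u\<close> \<open>m \<preceq> m'\<close>] by blast
    then show False
      using wraps_no_intermediate[OF \<delta> w' _ \<open>u \<in> pop \<delta> v\<close>[THEN subsetD[OF Pop_subset]]]
        \<open>\<not> u \<preceq> m'\<close> \<open>u \<in> V\<close> tle_refl \<open>u \<noteq> v\<close> by blast
  qed
  then have "m \<in> pop \<delta> v" using Pop_eq[OF \<delta>, of v] \<open>m \<in> \<delta> u\<close> \<open>\<delta> u \<subseteq> \<delta> v\<close> unfolding Delta_def by blast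
  then have "m \<in> pop \<delta> u" using Delta_Mset_eq[OF \<sigma> u] \<open>m \<preceq> u\<close> unfolding Delta_def by blast
  then show False using \<open>m \<notin> pop \<delta> u\<close> by blast
qed

lemma Pop_Pop_removed_singleton:
  assumes \<delta>: "orn \<delta>" and "y \<in> pop \<delta> v" "y \<notin> pop (pop \<delta>) v"
  shows "pop \<delta> y = {y}"
proof -
  obtain u where u: "u \<in> Mset V par (pop \<delta>) v" and "y \<in> Delta V par (pop \<delta> v) u"
    using Pop_eq[OF orn_Pop[OF \<delta>], of v] assms(2,3) by blast
  then have "y \<in> pop \<delta> u" using Delta_Mset_eq[OF orn_Pop[OF \<delta>] u] by blast
  then show ?thesis using Mset_Pop_singleton[OF \<delta> u] by simp
qed

lemma Pop_singleton: "orn \<delta> \<Longrightarrow> \<delta> y = {y} \<Longrightarrow> pop \<delta> y = {y}"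
  using Pop_subset[of \<delta> y] orn_self_mem[OF orn_Pop] orn_outside by fastforce

lemma orn_funpow_Pop: "orn \<delta> \<Longrightarrow> orn ((pop ^^ k) \<delta>)"
  by (induction k) (simp_all add: orn_Pop)

lemma funpow_Pop_subset: "(pop ^^ k) \<delta> v \<subseteq> \<delta> v"
  by (induction k) (use Pop_subset in fastforce)+

lemma funpow_Pop_mem_or_singleton:
  assumes \<delta>: "orn \<delta>" and "y \<in> pop \<delta> v"
  shows "y \<in> (pop ^^ k) (pop \<delta>) v \<or> (pop ^^ k) (pop \<delta>) y = {y}"
proof (induction k)
  case 0
  then show ?case using \<open>y \<in> pop \<delta> v\<close> by simp
next
  case (Suc k)
  let ?\<sigma> = "(pop ^^ k) \<delta>"
  have "orn ?\<sigma>" using orn_funpow_Pop[OF \<delta>] .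
  have "(pop ^^ k) (pop \<delta>) = pop ?\<sigma>" by (simp add: funpow_swap1)
  then have "(pop ^^ Suc k) (pop \<delta>) = pop (pop ?\<sigma>)" by simp
  moreover have "y \<in> pop (pop ?\<sigma>) v \<or> pop (pop ?\<sigma>) y = {y}"
    using Suc.IH \<open>(pop ^^ k) (pop \<delta>) = pop ?\<sigma>\<close>
      Pop_Pop_removed_singleton[OF \<open>orn ?\<sigma>\<close>] Pop_singleton[OF orn_Pop[OF \<open>orn ?\<sigma>\<close>]] by metis
  ultimately show ?case by simp
qed

lemma Mset_Pop_bead:
  assumes \<delta>: "orn \<delta>" and u: "u \<in> Mset V par (pop \<delta>) v"
    and w: "child V r par w v" "u \<preceq> w" and k: "1 \<le> k" "w \<in> (pop ^^ k) (pop \<delta>) v"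
  shows "is_bead V r par ((pop ^^ k) (pop \<delta>)) v w {u}"
proof -
  let ?\<sigma> = "(pop ^^ k) (pop \<delta>)"
  have \<sigma>: "orn (pop \<delta>)" using orn_Pop[OF \<delta>] .
  have "u \<in> pop \<delta> v" "u \<in> V" using wraps_mem[OF \<sigma>] u unfolding Mset_def wraps_def by auto
  have "w \<preceq> v" using w(1) tle_par unfolding child_def by auto
  obtain n where "k = Suc n" using k(1) by (cases k) auto
  then have "?\<sigma> v \<subseteq> pop (pop \<delta>) v" using funpow_Pop_subset[of n "pop (pop \<delta>)" v] by (simp add: funpow_swap1)
  then have "u \<notin> ?\<sigma> v" using Mset_notin_Pop[OF \<sigma> u] by blast
  moreover have "?\<sigma> u = {u}"
    using funpow_Pop_subset[of k "pop \<delta>" u] Mset_Pop_singleton[OF \<delta> u]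
      orn_self_mem[OF orn_funpow_Pop[OF \<sigma>] \<open>u \<in> V\<close>] by blast
  moreover have "y \<in> ?\<sigma> v \<or> ?\<sigma> y = {y}" if "u \<preceq> y" "y \<preceq> w" for y
  proof -
    have "y \<in> pop \<delta> v" using orn_path_closed[OF \<sigma> \<open>u \<in> pop \<delta> v\<close>] that tle_trans \<open>w \<preceq> v\<close> by blast
    then show ?thesis using funpow_Pop_mem_or_singleton[OF \<delta>] by blast
  qed
  ultimately show ?thesis
    unfolding is_bead_def using w k(2) \<open>u \<in> V\<close> by auto
qed

end

theorem lemma5p2:
  fixes V :: "'a set" and r :: 'a and par :: "'a \<Rightarrow> 'a"
    and \<delta> :: "'a \<Rightarrow> 'a set" and v u :: 'a
  assumes "rooted_tree V r par"
    and "\<delta> \<in> Pop V r par ` {\<delta>0. ornamentation V r par \<delta>0}"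
    and "v \<in> V"
    and "u \<in> Mset V par \<delta> v"
  shows "\<delta> u = {u} \<and>
    (\<forall>w. child V r par w v \<and> w \<in> \<delta> v \<and> u \<in> Delta V par (\<delta> v) w \<longrightarrow>
       (\<forall>k::nat. k \<ge> 1 \<and> w \<in> ((Pop V r par) ^^ k) \<delta> v \<longrightarrow>
          is_bead V r par (((Pop V r par) ^^ k) \<delta>) v w {u}))"
proof -
  interpret tree V r par by (rule tree.intro) (fact assms(1))
  obtain \<delta>0 where \<delta>0: "orn \<delta>0" and \<delta>_eq: "\<delta> = pop \<delta>0" using assms(2) by blast
  have "\<delta> u = {u}" using Mset_Pop_singleton[OF \<delta>0] assms(4) \<delta>_eq by simp
  moreover have "is_bead V r par ((pop ^^ k) \<delta>) v w {u}"
    if "child V r par w v" "u \<in> Delta V par (\<delta> v) w" "1 \<le> k" "w \<in> (pop ^^ k) \<delta> v" for w k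
    using Mset_Pop_bead[OF \<delta>0] assms(4) that \<delta>_eq unfolding Delta_def by simp
  ultimately show ?thesis by blast
qed

end
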